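(* Suppose $\Delta$ is full dimensional and convex. For any $\kappa\in(0,1]$ and $x\in\mathcal X$, $$\int_\Delta\exp\Big(\frac{g(x,\delta)}{\kappa}\Big)d\delta\ \ge\ \exp\Big(\frac{G(x)}{\kappa}\Big)\exp\big(-L_{g,\Delta}(R_\Delta+D_\Delta)\big)\frac{\pi^{d/2}}{\Gamma(d/2+1)}(\kappa R_\Delta)^d.$$
   Context: $\mathcal X\subset\mathbb R^n$ compact; $\Delta\subset\mathbb R^d$ compact; $g:\mathcal X\times\Delta\to\mathbb R$ with $\delta\mapsto g(x,\delta)$ $L_{g,\Delta}$-Lipschitz (Euclidean norm) for each $x$; $G(x):=\max_{\delta\in\Delta}g(x,\delta)$. $R_\Delta$ is the radius of the largest Euclidean ball contained in $\Delta$ (so $B_{R_\Delta}(\delta_0)\subseteq\Delta$ for some $\delta_0$), $D_\Delta:=\max_{\delta,\delta'\in\Delta}\|\delta-\delta'\|$, and $\Gamma$ is the gamma function. *)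

theory Defs
  imports "HOL-Analysis.Analysis"
begin

definition inradius :: "'a::euclidean_space set \<Rightarrow> real" where
  "inradius D = Sup {r. r \<ge> 0 \<and> (\<exists>c. cball c r \<subseteq> D)}"

definition worstcase :: "('b \<Rightarrow> 'a \<Rightarrow> real) \<Rightarrow> 'a set \<Rightarrow> 'b \<Rightarrow> real" where
  "worstcase g D x = Sup (g x ` D)"

end

theory Submission
  imports Defs
begin

text \<open>Let \<open>p\<close> maximise \<open>g x\<close> on \<open>\<Delta>\<close> and let \<open>cball c r \<subseteq> \<Delta>\<close>. Contracting this ball towards \<open>p\<close>
  by the factor \<open>\<kappa>\<close> keeps it inside the convex set \<open>\<Delta>\<close>, and every point of the contracted ball lies
  within \<open>\<kappa> (r + D\<^sub>\<Delta>)\<close> of \<open>p\<close>; so by the Lipschitz bound \<open>g x / \<kappa> \<ge> G(x) / \<kappa> - L (r + D\<^sub>\<Delta>)\<close>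
  on it, and the integral is at least \<open>exp (G(x) / \<kappa> - L (r + D\<^sub>\<Delta>))\<close> times the volume of a ball
  of radius \<open>\<kappa> r\<close>. This lower bound is continuous in \<open>r\<close>, so it persists at the supremum \<open>R\<^sub>\<Delta>\<close>
  of the inscribed radii, whether or not that supremum is attained.\<close>

lemma integrable_on_compact_continuous:
  fixes f :: "'a::euclidean_space \<Rightarrow> real"
  assumes "compact S" "continuous_on S f"
  shows "f integrable_on S"
proof -
  have "(\<lambda>x. indicator S x *\<^sub>R f x) integrable_on UNIV"
    by (rule integrable_on_lborel[OF borel_integrable_compact[OF assms]])
  moreover have "(\<lambda>x. indicator S x *\<^sub>R f x) = (\<lambda>x. if x \<in> S then f x else 0)"
    by (auto simp: indicator_def)
  ultimately show ?thesis
    using integrable_restrict_UNIV by metis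
qed

lemma integral_const_cball:
  fixes c :: "'a::euclidean_space"
  assumes "0 \<le> r"
  shows "integral (cball c r) (\<lambda>_. k) = k * unit_ball_vol DIM('a) * r ^ DIM('a)"
proof -
  have "integral (cball c r) (\<lambda>_. k) = k * integral (cball c r) (\<lambda>_. 1)"
    using integral_cmul[of "cball c r" k "\<lambda>_. 1::real"] by simp
  also have "integral (cball c r) (\<lambda>_. 1::real) = measure lebesgue (cball c r)"
    by (rule lmeasure_integral[symmetric]) simp
  also have "\<dots> = measure lborel (cball c r)"
    by simp
  also have "\<dots> = unit_ball_vol DIM('a) * r ^ DIM('a)"
    by (rule content_cball[OF assms])
  finally show ?thesis
    by simp
qed

lemma integral_ge_on_cball:
  fixes f :: "'a::euclidean_space \<Rightarrow> real"
  assumes "compact S" "continuous_on S f" "\<And>y. y \<in> S \<Longrightarrow> 0 \<le> f y"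
    and "cball c r \<subseteq> S" "0 \<le> r" "\<And>y. y \<in> cball c r \<Longrightarrow> m \<le> f y"
  shows "m * unit_ball_vol DIM('a) * r ^ DIM('a) \<le> integral S f"
proof -
  have int_ball: "f integrable_on cball c r"
    by (rule integrable_on_compact_continuous[OF compact_cball continuous_on_subset[OF assms(2,4)]])
  have "m * unit_ball_vol DIM('a) * r ^ DIM('a) = integral (cball c r) (\<lambda>_. m)"
    by (simp add: integral_const_cball[OF \<open>0 \<le> r\<close>])
  also have "\<dots> \<le> integral (cball c r) f"
    using assms(6) int_ball by (intro integral_le integrable_on_const) auto
  also have "\<dots> \<le> integral S f"
    using assms(3,4) int_ball integrable_on_compact_continuous[OF assms(1,2)]
    by (intro integral_subset_le) auto
  finally show ?thesis .
qed

lemma cball_homothety_subset: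
  fixes S :: "'a::real_normed_vector set"
  assumes "convex S" "p \<in> S" "cball c r \<subseteq> S" "0 < t" "t \<le> 1"
  shows "cball (p + t *\<^sub>R (c - p)) (t * r) \<subseteq> S"
proof
  fix y assume y: "y \<in> cball (p + t *\<^sub>R (c - p)) (t * r)"
  define e where "e = p + (1 / t) *\<^sub>R (y - p)"
  have "e - c = (1 / t) *\<^sub>R (y - (p + t *\<^sub>R (c - p)))"
    unfolding e_def using \<open>0 < t\<close> by (simp add: algebra_simps)
  then have "dist c e = dist (p + t *\<^sub>R (c - p)) y / t"
    using \<open>0 < t\<close> by (simp add: dist_norm norm_minus_commute[of c] norm_minus_commute[of y])
  also have "\<dots> \<le> r"
    using y \<open>0 < t\<close> by (simp add: divide_le_eq mult.commute)
  finally have "e \<in> S"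
    using assms(3) by auto
  then have "(1 - t) *\<^sub>R p + t *\<^sub>R e \<in> S"
    using convexD[OF assms(1,2)] assms(4,5) by simp
  moreover have "(1 - t) *\<^sub>R p + t *\<^sub>R e = y"
    unfolding e_def using \<open>0 < t\<close> by (simp add: algebra_simps)
  ultimately show "y \<in> S"
    by simp
qed

lemma integral_exp_lipschitz_ge:
  fixes S :: "'a::euclidean_space set"
  assumes "compact S" "convex S" "L-lipschitz_on S f" "p \<in> S"
    and "0 < \<kappa>" "\<kappa> \<le> 1" "cball c r \<subseteq> S" "0 \<le> r"
  shows "exp (f p / \<kappa>) * exp (- L * (r + diameter S)) * unit_ball_vol DIM('a) * (\<kappa> * r) ^ DIM('a)
         \<le> integral S (\<lambda>y. exp (f y / \<kappa>))"
proof (rule integral_ge_on_cball)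
  define c' where "c' = p + \<kappa> *\<^sub>R (c - p)"
  have L: "0 \<le> L" "\<And>a b. a \<in> S \<Longrightarrow> b \<in> S \<Longrightarrow> dist (f a) (f b) \<le> L * dist a b"
    using assms(3) unfolding lipschitz_on_def by auto
  show ball: "cball c' (\<kappa> * r) \<subseteq> S"
    unfolding c'_def using assms by (intro cball_homothety_subset) auto
  show "continuous_on S (\<lambda>y. exp (f y / \<kappa>))"
    using lipschitz_on_continuous_on[OF assms(3)] assms(5) by (intro continuous_intros) auto
  show "exp (f p / \<kappa>) * exp (- L * (r + diameter S)) \<le> exp (f y / \<kappa>)"
    if y: "y \<in> cball c' (\<kappa> * r)" for y
  proof -
    have "c \<in> S"
      using assms(7,8) by auto
    then have "dist c' p \<le> \<kappa> * diameter S"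
      using diameter_bounded_bound[OF compact_imp_bounded[OF assms(1)] _ assms(4)] assms(5)
      unfolding c'_def by (simp add: dist_norm)
    moreover have "dist y c' \<le> \<kappa> * r"
      using y by (simp add: dist_commute)
    ultimately have dist_bound: "dist y p \<le> \<kappa> * (r + diameter S)"
      using dist_triangle[of y p c'] by (simp add: distrib_left)
    have "y \<in> S"
      using y ball by blast
    have "f p - f y \<le> dist (f y) (f p)"
      by (simp add: dist_real_def)
    also have "\<dots> \<le> L * dist y p"
      using L(2)[OF \<open>y \<in> S\<close> assms(4)] .
    also have "\<dots> \<le> L * (\<kappa> * (r + diameter S))"
      using mult_left_mono[OF dist_bound L(1)] .
    finally have "f p - f y \<le> L * (\<kappa> * (r + diameter S))" .
    then have "(f p - f y) / \<kappa> \<le> L * (r + diameter S)"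
      using assms(5) by (simp add: pos_divide_le_eq ac_simps)
    then have "f p / \<kappa> - L * (r + diameter S) \<le> f y / \<kappa>"
      by (simp add: diff_divide_distrib)
    then show ?thesis
      by (simp flip: exp_add)
  qed
qed (use assms in \<open>simp_all\<close>)

lemma radius_le_diameter_if_cball_subset:
  fixes S :: "'a::euclidean_space set"
  assumes "bounded S" "cball c r \<subseteq> S" "0 \<le> r"
  shows "r \<le> diameter S"
proof -
  obtain b :: 'a where b: "b \<in> Basis"
    using nonempty_Basis by blast
  have "c \<in> S" "c + r *\<^sub>R b \<in> S"
    using assms(2,3) b by (auto simp: dist_norm)
  then have "dist c (c + r *\<^sub>R b) \<le> diameter S"
    using diameter_bounded_bound[OF assms(1)] by blast
  then show ?thesis
    using assms(3) b by (simp add: dist_norm)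
qed

lemma inradius_bound:
  fixes S :: "'a::euclidean_space set" and \<Phi> :: "real \<Rightarrow> real"
  assumes "bounded S" "S \<noteq> {}" "continuous_on UNIV \<Phi>"
    and "\<And>c r. 0 \<le> r \<Longrightarrow> cball c r \<subseteq> S \<Longrightarrow> \<Phi> r \<le> B"
  shows "\<Phi> (inradius S) \<le> B"
proof -
  define radii where "radii = {r. r \<ge> 0 \<and> (\<exists>c. cball c r \<subseteq> S)}"
  obtain c where "c \<in> S"
    using assms(2) by blast
  then have "0 \<in> radii"
    unfolding radii_def by (intro CollectI conjI exI[of _ c]) auto
  moreover have "bdd_above radii"
    using radius_le_diameter_if_cball_subset[OF assms(1)]
    unfolding radii_def bdd_above_def by blast
  ultimately have "inradius S \<in> closure radii"
    unfolding inradius_def radii_def[symmetric] by (intro closure_contains_Sup) auto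
  also have "closure radii \<subseteq> {r. \<Phi> r \<le> B}"
    using assms(3,4) unfolding radii_def
    by (intro closure_minimal closed_Collect_le[OF assms(3) continuous_on_const]) auto
  finally show ?thesis
    by simp
qed

theorem mainTheorem10:
  fixes X :: "'n::euclidean_space set"
    and \<Delta> :: "'d::euclidean_space set"
    and g :: "'n \<Rightarrow> 'd \<Rightarrow> real"
    and L :: real and \<kappa> :: real and x :: 'n
  assumes "compact X" and "compact \<Delta>"
    and "convex \<Delta>" and "interior \<Delta> \<noteq> {}"
    and "\<And>y. y \<in> X \<Longrightarrow> L-lipschitz_on \<Delta> (g y)"
    and "0 < \<kappa>" and "\<kappa> \<le> 1"
    and "x \<in> X"
  shows "integral \<Delta> (\<lambda>\<delta>. exp (g x \<delta> / \<kappa>))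
         \<ge> exp (worstcase g \<Delta> x / \<kappa>) * exp (- L * (inradius \<Delta> + diameter \<Delta>))
           * (pi powr (real DIM('d) / 2) / Gamma (real DIM('d) / 2 + 1))
           * (\<kappa> * inradius \<Delta>) ^ DIM('d)"
proof -
  have lip: "L-lipschitz_on \<Delta> (g x)"
    using assms(5,8) by blast
  have "\<Delta> \<noteq> {}"
    using assms(4) interior_subset by blast
  then obtain p where p: "p \<in> \<Delta>" "\<And>y. y \<in> \<Delta> \<Longrightarrow> g x y \<le> g x p"
    using continuous_attains_sup[OF assms(2) _ lipschitz_on_continuous_on[OF lip]] by blast
  have "worstcase g \<Delta> x = g x p"
    unfolding worstcase_def by (rule cSup_eq_maximum) (use p in auto)
  moreover have "exp (g x p / \<kappa>) * exp (- L * (inradius \<Delta> + diameter \<Delta>))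
                   * unit_ball_vol DIM('d) * (\<kappa> * inradius \<Delta>) ^ DIM('d)
                 \<le> integral \<Delta> (\<lambda>\<delta>. exp (g x \<delta> / \<kappa>))"
    using compact_imp_bounded[OF assms(2)] \<open>\<Delta> \<noteq> {}\<close>
  proof (rule inradius_bound)
    show "continuous_on UNIV (\<lambda>r. exp (g x p / \<kappa>) * exp (- L * (r + diameter \<Delta>))
                                   * unit_ball_vol DIM('d) * (\<kappa> * r) ^ DIM('d))"
      by (intro continuous_intros)
    show "exp (g x p / \<kappa>) * exp (- L * (r + diameter \<Delta>)) * unit_ball_vol DIM('d) * (\<kappa> * r) ^ DIM('d)
            \<le> integral \<Delta> (\<lambda>\<delta>. exp (g x \<delta> / \<kappa>))" if "0 \<le> r" "cball c r \<subseteq> \<Delta>" for c r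
      using integral_exp_lipschitz_ge[OF assms(2,3) lip p(1) assms(6,7) that(2,1)] .
  qed
  ultimately show ?thesis
    by (simp add: unit_ball_vol_def)
qed

end
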